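(* Let $(G,k)$ be an instance of Clique and let $(\mathcal{G},k',\ell)$ be the instance of Multistage Vertex Cover produced from $(G,k)$ by the construction described in the context. If $(\mathcal{G},k',\ell)$ is a yes-instance of Multistage Vertex Cover, then $G$ contains a clique of size $k$.
   Context: Multistage Vertex Cover: given a temporal graph $\mathcal{G}$, i.e. a sequence of layers (static graphs) $(G_1,\dots,G_\tau)$ on a common vertex set $V'$, and integers $k'\in\mathbb{N}$, $\ell\in\mathbb{N}_0$, decide whether there is $(S_1,\dots,S_\tau)$ with each $S_i\subseteq V'$ a vertex cover of $G_i$ of size at most $k'$ and $|S_i\triangle S_{i+1}|\le\ell$ for all $i<\tau$ ($\triangle$ = symmetric difference). Construction: let $G=(V,E)$ with $E=\{e_1,\dots,e_m\}$, $m=|E|$, and positive integer $k$. Let $K=\binom{k}{2}$, $k'=2K+k+1$, $\kappa=K+k+3$, $\tau=2m\kappa+1$, and $\ell=2$. The vertex set $V'$ contains $V\cup E$ (each edge of $G$ is also a vertex), the sets $U^t=\{u^t_1,\dots,u^t_K\}$ for $t\in\{1,\dots,\kappa+1\}$, the set $C=\{c_1,\dots,c_{\tau}\}$, and additional new leaf vertices introduced below. The layers $G_1,\dots,G_\tau$ have the following edges: (1) for every odd $i\in\{1,\dots,\tau\}$, in $G_i$ the vertex $c_i$ is the center of a star with $k'+1$ new leaf vertices; (2) for every $j\in\{0,\dots,\kappa\}$, in $G_{2mj+1}$ each vertex of $U^{j+1}$ is the center of a star with $k'+1$ new leaf vertices; (3) for every $j\in\{0,\dots,\kappa-1\}$ and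 $i\in\{1,\dots,2m+1\}$, in $G_{2mj+i}$ the vertex $u^{j+1}_x$ is adjacent to $u^{j+2}_x$ for every $x\in\{1,\dots,K\}$; (4) for every even $i\in\{1,\dots,\tau-1\}$, the edge $\{c_i,c_{i+1}\}$ is present in $G_i$ and in $G_{i+1}$; (5) for every $j\in\{0,\dots,\kappa-1\}$ and $i\in\{1,\dots,m\}$ with $e_i=\{v,w\}$, in $G_{2mj+2i}$ the vertex $c_{2mj+2i}$ is adjacent to the vertices $e_i$, $v$ and $w$. No other edges are present. The output is $(\mathcal{G}=(G_1,\dots,G_\tau),k',\ell)$. *)

theory Defs
  imports Main
begin

text \<open>Static graphs are given by a vertex set and a set of edges, each edge a 2-element set.
  A temporal graph is a sequence of layers, indexed 1..tau, given by a function nat => edge set.\<close>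

definition is_vertex_cover :: "'v set set \<Rightarrow> 'v set \<Rightarrow> bool" where
  "is_vertex_cover Ed S \<longleftrightarrow> (\<forall>e\<in>Ed. e \<inter> S \<noteq> {})"

definition symdiff :: "'v set \<Rightarrow> 'v set \<Rightarrow> 'v set" where
  "symdiff A B = (A - B) \<union> (B - A)"

definition multistage_vc_yes ::
  "'v set \<Rightarrow> (nat \<Rightarrow> 'v set set) \<Rightarrow> nat \<Rightarrow> nat \<Rightarrow> nat \<Rightarrow> bool" where
  "multistage_vc_yes Vs L tau k' l \<longleftrightarrow>
     (\<exists>S :: nat \<Rightarrow> 'v set.
        (\<forall>i\<in>{1..tau}. S i \<subseteq> Vs \<and> is_vertex_cover (L i) (S i) \<and> card (S i) \<le> k') \<and>
        (\<forall>i. 1 \<le> i \<and> i < tau \<longrightarrow> card (symdiff (S i) (S (Suc i))) \<le> l))"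

definition has_clique :: "'a set \<Rightarrow> 'a set set \<Rightarrow> nat \<Rightarrow> bool" where
  "has_clique V E k \<longleftrightarrow>
     (\<exists>Q\<subseteq>V. card Q = k \<and> (\<forall>u\<in>Q. \<forall>w\<in>Q. u \<noteq> w \<longrightarrow> {u, w} \<in> E))"

text \<open>Orig v: vertex v of G;  EdgeV e: the edge e of G as a vertex;  U t x: u^t_x;  C i: c_i;
  LeafC i y: the y-th leaf of the star at c_i in layer i (rule 1);
  LeafU t x y: the y-th leaf of the star at u^t_x in layer 2m(t-1)+1 (rule 2).\<close>
datatype 'a vtx = Orig 'a | EdgeV "'a set" | U nat nat | C nat
  | LeafC nat nat | LeafU nat nat nat

definition red_K :: "nat \<Rightarrow> nat" where "red_K k = k choose 2"
definition red_k' :: "nat \<Rightarrow> nat" where "red_k' k = 2 * red_K k + k + 1"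
definition red_kappa :: "nat \<Rightarrow> nat" where "red_kappa k = red_K k + k + 3"
definition red_tau :: "'a set list \<Rightarrow> nat \<Rightarrow> nat" where
  "red_tau es k = 2 * length es * red_kappa k + 1"
definition red_l :: nat where "red_l = 2"

text \<open>The edge e_i (1 <= i <= m) is es ! (i - 1).\<close>
definition red_vertices :: "'a set \<Rightarrow> 'a set list \<Rightarrow> nat \<Rightarrow> 'a vtx set" where
  "red_vertices V es k =
     Orig ` V \<union> EdgeV ` set es
     \<union> {U t x | t x. t \<in> {1..red_kappa k + 1} \<and> x \<in> {1..red_K k}}
     \<union> C ` {1..red_tau es k}
     \<union> {LeafC i y | i y. i \<in> {1..red_tau es k} \<and> odd i \<and> y \<in> {1..red_k' k + 1}}
     \<union> {LeafU t x y | t x y. t \<in> {1..red_kappa k + 1} \<and> x \<in> {1..red_K k}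
                          \<and> y \<in> {1..red_k' k + 1}}"

definition red_layer :: "'a set list \<Rightarrow> nat \<Rightarrow> nat \<Rightarrow> 'a vtx set set" where
  "red_layer es k i =
     (let m = length es; K = red_K k; k' = red_k' k; \<kappa> = red_kappa k; \<tau> = red_tau es k in
     {e. \<comment> \<open>(1)\<close>
         (odd i \<and> 1 \<le> i \<and> i \<le> \<tau> \<and> (\<exists>y\<in>{1..k'+1}. e = {C i, LeafC i y}))
       \<comment> \<open>(2)\<close>
       \<or> (\<exists>j\<le>\<kappa>. i = 2*m*j + 1 \<and>
            (\<exists>x\<in>{1..K}. \<exists>y\<in>{1..k'+1}. e = {U (j+1) x, LeafU (j+1) x y}))
       \<comment> \<open>(3)\<close>
       \<or> (\<exists>j<\<kappa>. \<exists>i'\<in>{1..2*m+1}. i = 2*m*j + i' \<and>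
            (\<exists>x\<in>{1..K}. e = {U (j+1) x, U (j+2) x}))
       \<comment> \<open>(4)\<close>
       \<or> (\<exists>i0. even i0 \<and> 1 \<le> i0 \<and> i0 \<le> \<tau> - 1 \<and> (i = i0 \<or> i = i0 + 1)
            \<and> e = {C i0, C (i0 + 1)})
       \<comment> \<open>(5)\<close>
       \<or> (\<exists>j<\<kappa>. \<exists>i'\<in>{1..m}. i = 2*m*j + 2*i' \<and>
            (\<exists>v w. es ! (i' - 1) = {v, w} \<and>
               (e = {C i, EdgeV (es ! (i' - 1))} \<or> e = {C i, Orig v} \<or> e = {C i, Orig w})))})"

end

theory Submission
  imports Defs
begin

text \<open>
  The stars force c_i into S_i for every odd i and all of U^{j+1}
  into S_{2mj+1}. Every such required vertex that is missing from S_1 (or S_tau) has to enter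
  (or leave) the solution at some step, and S_1, S_tau have at most k' elements; this alone uses
  up almost all of the budget 2 (tau - 1) for the symmetric differences. Budget is saved only by
  skipping c_i at an even time 2mj + 2i, and then the cover contains the edge vertex e_i and both
  its endpoints instead. Since there are kappa = K + k + 3 segments, averaging yields a segment j
  in which the number of skipped edges exceeds K + X/2, where X counts the exchanges of vertices
  of V \<union> E inside the segment. As S at both ends of the segment contains at most K + k vertices
  of V \<union> E, the vertices of V \<union> E used in the segment number at most K + k + X/2. Hence at least
  K = binom k 2 skipped edges lie on at most k vertices of G, which is only possible if these are
  k vertices spanning a clique.
\<close>

lemma symdiff_iff [simp]: "v \<in> symdiff A B \<longleftrightarrow> (v \<in> A) \<noteq> (v \<in> B)"
  by (auto simp: symdiff_def)

lemma ex_change_between: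
  fixes P :: "nat \<Rightarrow> bool"
  assumes "a \<le> b" "P a \<noteq> P b"
  shows "\<exists>s\<in>{a..<b}. P s \<noteq> P (Suc s)"
proof (rule ccontr)
  assume no_change: "\<not> ?thesis"
  have unchanged: "P n = P a" if "a \<le> n" "n \<le> b" for n
    using that
  proof (induction n)
    case (Suc n)
    show ?case
    proof (cases "a = Suc n")
      case False
      with Suc.prems have "n \<in> {a..<b}" by simp
      with no_change have "P (Suc n) = P n" by blast
      with Suc show ?thesis using \<open>n \<in> {a..<b}\<close> by simp
    qed simp
  qed simp
  from unchanged[of b] assms show False by simp
qed

lemma of_bool_change_le_card_changes:
  fixes P :: "nat \<Rightarrow> bool"
  assumes "a \<le> b"
  shows "of_bool (P a \<noteq> P b) \<le> card {s\<in>{a..<b}. P s \<noteq> P (Suc s)}"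
proof (cases "P a = P b")
  case False
  with ex_change_between[OF assms] have "{s\<in>{a..<b}. P s \<noteq> P (Suc s)} \<noteq> {}" by blast
  then show ?thesis by (simp add: card_gt_0_iff Suc_le_eq)
qed simp

lemma misses_at_ends_le_card_changes:
  assumes "a \<le> r" "r \<le> b" "v \<in> S r"
  shows "of_bool (v \<notin> S a) + of_bool (v \<notin> S b)
           \<le> card {s\<in>{a..<b}. v \<in> symdiff (S s) (S (Suc s))}"
proof -
  let ?changes = "\<lambda>l u. {s\<in>{l..<u}. (v \<in> S s) \<noteq> (v \<in> S (Suc s))}"
  have "?changes a b = ?changes a r \<union> ?changes r b" "?changes a r \<inter> ?changes r b = {}"
    using assms(1,2) by auto
  then have "card (?changes a b) = card (?changes a r) + card (?changes r b)"
    by (simp add: card_Un_disjoint)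
  moreover have "of_bool (v \<notin> S a) \<le> card (?changes a r)" "of_bool (v \<notin> S b) \<le> card (?changes r b)"
    using of_bool_change_le_card_changes[of _ _ "\<lambda>s. v \<in> S s"] assms by fastforce+
  ultimately show ?thesis by simp
qed

lemma card_filter_eq_sum_of_bool: "finite A \<Longrightarrow> card {x \<in> A. P x} = (\<Sum>x\<in>A. of_bool (P x))"
  by (simp add: Int_def)

lemma sum_card_Int_swap:
  assumes "finite I" "finite A"
  shows "(\<Sum>s\<in>I. card (D s \<inter> A)) = (\<Sum>v\<in>A. card {s\<in>I. v \<in> D s})"
proof -
  have "(\<Sum>s\<in>I. card (D s \<inter> A)) = (\<Sum>s\<in>I. \<Sum>v\<in>A. of_bool (v \<in> D s))"
    using assms(2) by (simp add: Int_def conj_commute)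
  also have "\<dots> = (\<Sum>v\<in>A. \<Sum>s\<in>I. of_bool (v \<in> D s))"
    by (rule sum.swap)
  also have "\<dots> = (\<Sum>v\<in>A. card {s\<in>I. v \<in> D s})"
    using assms(1) by (simp add: Int_def)
  finally show ?thesis .
qed

lemma card_misses_at_ends_le_changes:
  assumes "finite R" "\<And>v. v \<in> R \<Longrightarrow> \<exists>r\<in>{a..b}. v \<in> S r"
  shows "card (R - S a) + card (R - S b) \<le> (\<Sum>s\<in>{a..<b}. card (symdiff (S s) (S (Suc s)) \<inter> R))"
proof -
  have "card (R - S a) + card (R - S b) = (\<Sum>v\<in>R. of_bool (v \<notin> S a) + of_bool (v \<notin> S b))"
    using assms(1) by (simp add: sum.distrib Diff_eq Int_def)
  also have "\<dots> \<le> (\<Sum>v\<in>R. card {s\<in>{a..<b}. v \<in> symdiff (S s) (S (Suc s))})"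
    using assms(2) misses_at_ends_le_card_changes by (intro sum_mono) fastforce
  also have "\<dots> = (\<Sum>s\<in>{a..<b}. card (symdiff (S s) (S (Suc s)) \<inter> R))"
    using assms(1) by (simp add: sum_card_Int_swap)
  finally show ?thesis .
qed

lemma sum_blocks:
  fixes f :: "nat \<Rightarrow> 'b::comm_monoid_add"
  shows "(\<Sum>s\<in>{1..<d*n+1}. f s) = (\<Sum>j<n. \<Sum>s\<in>{d*j+1..<d*j+d+1}. f s)"
proof (induction n)
  case 0
  then show ?case by simp
next
  case (Suc n)
  have "(\<Sum>s\<in>{1..<d*n+d+1}. f s) = (\<Sum>s\<in>{1..<d*n+1}. f s) + (\<Sum>s\<in>{d*n+1..<d*n+d+1}. f s)"
    by (rule sum.atLeastLessThan_concat[symmetric]) simp_all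
  then show ?case using Suc.IH by (simp add: add.commute)
qed

lemma vertex_cover_edge: "is_vertex_cover Ed S \<Longrightarrow> {a, b} \<in> Ed \<Longrightarrow> a \<in> S \<or> b \<in> S"
  unfolding is_vertex_cover_def by force

lemma center_in_vertex_cover:
  assumes "is_vertex_cover Ed S" "finite S" "card S < card Y" "\<forall>y\<in>Y. {c, y} \<in> Ed"
  shows "c \<in> S"
proof (rule ccontr)
  assume "c \<notin> S"
  then have "Y \<subseteq> S" using assms(4) vertex_cover_edge[OF assms(1)] by blast
  with card_mono[OF assms(2)] assms(3) show False by (simp add: not_le[symmetric])
qed

lemma has_clique_if_many_edges:
  assumes "finite Q" "Q \<subseteq> V" "card Q \<le> k" "2 \<le> k"
    and "F \<subseteq> Ed" "\<And>e. e \<in> F \<Longrightarrow> e \<subseteq> Q \<and> card e = 2" "k choose 2 \<le> card F"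
  shows "has_clique V Ed k"
proof -
  let ?pairs = "{e. e \<subseteq> Q \<and> card e = 2}"
  have "finite ?pairs" using assms(1) by simp
  moreover have F_pairs: "F \<subseteq> ?pairs" using assms(6) by blast
  ultimately have F_le: "card F \<le> card Q choose 2"
    using card_mono n_subsets[OF assms(1), of 2] by fastforce
  have card_Q: "card Q = k"
  proof (rule ccontr)
    assume "card Q \<noteq> k"
    then have "card Q choose 2 \<le> (k - 1) choose 2"
      using assms(3) by (intro binomial_right_mono) simp
    also have "\<dots> < k choose 2"
      using assms(4) binomial_Suc_Suc[of "k - 1" 1] by (simp add: numeral_2_eq_2)
    finally show False using F_le assms(7) by simp
  qed
  have "card F = card ?pairs"
    using F_le assms(7) card_Q n_subsets[OF assms(1), of 2] by simp
  then have "F = ?pairs"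
    using card_subset_eq[OF \<open>finite ?pairs\<close> F_pairs] by simp
  then show ?thesis
    unfolding has_clique_def using assms(2,5) card_Q by (intro exI[of _ Q]) auto
qed

lemma finite_red_vertices:
  assumes "finite V"
  shows "finite (red_vertices V es k)"
proof -
  have leafC: "finite {LeafC i y | i y. i \<in> A \<and> odd i \<and> y \<in> B}"
    if "finite A" "finite B" for A B
    by (rule finite_subset[of _ "(\<lambda>(i, y). LeafC i y) ` (A \<times> B)"]) (use that in auto)
  have leafU: "finite {LeafU t x y | t x y. t \<in> A \<and> x \<in> B \<and> y \<in> Y}"
    if "finite A" "finite B" "finite Y" for A B Y
    by (rule finite_subset[of _ "(\<lambda>(t, x, y). LeafU t x y) ` (A \<times> B \<times> Y)"]) (use that in force)+
  show ?thesis
    unfolding red_vertices_def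
    by (intro finite_UnI finite_imageI finite_image_set2 leafC leafU) (simp_all add: assms)
qed

lemma layer_C_leaf:
  "odd i \<Longrightarrow> i \<in> {1..red_tau es k} \<Longrightarrow> y \<in> {1..red_k' k + 1}
    \<Longrightarrow> {C i, LeafC i y} \<in> red_layer es k i"
  unfolding red_layer_def Let_def by (intro CollectI disjI1) auto

lemma layer_U_leaf:
  "j \<le> red_kappa k \<Longrightarrow> x \<in> {1..red_K k} \<Longrightarrow> y \<in> {1..red_k' k + 1}
    \<Longrightarrow> {U (j+1) x, LeafU (j+1) x y} \<in> red_layer es k (2*length es*j + 1)"
  unfolding red_layer_def Let_def by (rule CollectI, rule disjI2, rule disjI1) blast

lemma layer_edge:
  assumes "j < red_kappa k" "i \<in> {1..length es}" "es ! (i - 1) = {v, w}"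
    and "x \<in> {EdgeV (es ! (i - 1)), Orig v, Orig w}"
  shows "{C (2*length es*j + 2*i), x} \<in> red_layer es k (2*length es*j + 2*i)"
  unfolding red_layer_def Let_def
  by (rule CollectI, (rule disjI2)+, intro exI[of _ j] conjI[OF assms(1)] bexI[OF _ assms(2)]
      conjI[OF refl] exI[of _ v] exI[of _ w] conjI[OF assms(3)]) (use assms(4) in auto)

locale red_solution =
  fixes V :: "'a set" and es :: "'a set list" and k :: nat and S :: "nat \<Rightarrow> 'a vtx set"
  assumes finite_V: "finite V"
    and distinct_es: "distinct es"
    and es_edges: "\<forall>e\<in>set es. \<exists>v w. v \<in> V \<and> w \<in> V \<and> v \<noteq> w \<and> e = {v, w}"
    and solution: "\<forall>i\<in>{1..red_tau es k}. S i \<subseteq> red_vertices V es k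
                     \<and> is_vertex_cover (red_layer es k i) (S i) \<and> card (S i) \<le> red_k' k"
    and small_changes: "\<forall>i. 1 \<le> i \<and> i < red_tau es k \<longrightarrow> card (symdiff (S i) (S (Suc i))) \<le> red_l"
begin

abbreviation m :: nat where "m \<equiv> length es"
abbreviation K :: nat where "K \<equiv> red_K k"
abbreviation k' :: nat where "k' \<equiv> red_k' k"
abbreviation \<kappa> :: nat where "\<kappa> \<equiv> red_kappa k"
abbreviation \<tau> :: nat where "\<tau> \<equiv> red_tau es k"
abbreviation change :: "nat \<Rightarrow> 'a vtx set" where "change s \<equiv> symdiff (S s) (S (Suc s))"
abbreviation graph_vertices :: "'a vtx set" where "graph_vertices \<equiv> Orig ` V \<union> EdgeV ` set es"
abbreviation segment :: "nat \<Rightarrow> nat set" where "segment j \<equiv> {2*m*j+1..<2*m*j+2*m+1}"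
abbreviation graph_changes :: "nat \<Rightarrow> nat" where
  "graph_changes j \<equiv> \<Sum>s\<in>segment j. card (change s \<inter> graph_vertices)"

lemma tau_eq: "\<tau> = 2*m*\<kappa> + 1"
  by (simp add: red_tau_def)

lemma k'_eq: "k' = 2*K + k + 1"
  by (simp add: red_k'_def)

lemma kappa_eq: "\<kappa> = K + k + 3"
  by (simp add: red_kappa_def)

lemma segment_end_le_tau: "j < \<kappa> \<Longrightarrow> 2*m*j + 2*m + 1 \<le> \<tau>"
  using mult_le_mono2[of "j + 1" \<kappa> "2*m"] by (simp add: tau_eq algebra_simps)

lemma segment_start_mem: "j \<le> \<kappa> \<Longrightarrow> 2*m*j + 1 \<in> {1..\<tau>}"
  using mult_le_mono2[of j \<kappa> "2*m"] by (simp add: tau_eq)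

lemma finite_S: "i \<in> {1..\<tau>} \<Longrightarrow> finite (S i)"
  using solution finite_red_vertices[OF finite_V] finite_subset by blast

lemma card_S_le: "i \<in> {1..\<tau>} \<Longrightarrow> card (S i) \<le> k'"
  using solution by blast

lemma vertex_cover_S: "i \<in> {1..\<tau>} \<Longrightarrow> is_vertex_cover (red_layer es k i) (S i)"
  using solution by blast

lemma card_change_le: "s \<in> {1..<\<tau>} \<Longrightarrow> card (change s) \<le> 2"
  using small_changes by (simp add: red_l_def)

lemma C_in_S:
  assumes "odd i" "i \<in> {1..\<tau>}"
  shows "C i \<in> S i"
proof (rule center_in_vertex_cover[OF vertex_cover_S[OF assms(2)] finite_S[OF assms(2)]])
  show "card (S i) < card (LeafC i ` {1..k' + 1})"
    using card_S_le[OF assms(2)] by (simp add: card_image inj_on_def)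
  show "\<forall>y\<in>LeafC i ` {1..k' + 1}. {C i, y} \<in> red_layer es k i"
    using assms layer_C_leaf by blast
qed

lemma U_in_S:
  assumes "j \<le> \<kappa>" "x \<in> {1..K}"
  shows "U (j+1) x \<in> S (2*m*j + 1)"
proof -
  have time: "2*m*j + 1 \<in> {1..\<tau>}"
    using assms(1) by (rule segment_start_mem)
  show ?thesis
  proof (rule center_in_vertex_cover[OF vertex_cover_S[OF time] finite_S[OF time]])
    show "card (S (2*m*j + 1)) < card (LeafU (j+1) x ` {1..k' + 1})"
      using card_S_le[OF time] by (simp add: card_image inj_on_def)
    show "\<forall>y\<in>LeafU (j+1) x ` {1..k' + 1}. {U (j+1) x, y} \<in> red_layer es k (2*m*j + 1)"
      using assms layer_U_leaf by blast
  qed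
qed

lemma card_S_Int_graph_vertices:
  assumes "i \<in> {1..\<tau>}" "C i \<in> S i" "\<forall>x\<in>{1..K}. U t x \<in> S i"
  shows "card (S i \<inter> graph_vertices) \<le> K + k"
proof -
  let ?forced = "insert (C i) (U t ` {1..K}) :: 'a vtx set"
  have "card ?forced = K + 1"
    by (subst card_insert_disjoint) (auto simp: card_image inj_on_def)
  moreover have "card (S i \<inter> graph_vertices \<union> ?forced) = card (S i \<inter> graph_vertices) + card ?forced"
    using finite_S[OF assms(1)] by (intro card_Un_disjoint) auto
  moreover have "card (S i \<inter> graph_vertices \<union> ?forced) \<le> card (S i)"
    using assms finite_S[OF assms(1)] by (intro card_mono) auto
  ultimately show ?thesis
    using card_S_le[OF assms(1)] k'_eq by simp
qed

definition skipped :: "nat \<Rightarrow> nat set" where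
  "skipped j = {i \<in> {1..m}. C (2*m*j + 2*i) \<notin> S (2*m*j + 2*i)}"

lemma C_missing_in_segment:
  assumes "j < \<kappa>"
  shows "{s \<in> segment j. C s \<notin> S s} = (\<lambda>i. 2*m*j + 2*i) ` skipped j"
proof
  show "(\<lambda>i. 2*m*j + 2*i) ` skipped j \<subseteq> {s \<in> segment j. C s \<notin> S s}"
    by (auto simp: skipped_def)
  show "{s \<in> segment j. C s \<notin> S s} \<subseteq> (\<lambda>i. 2*m*j + 2*i) ` skipped j"
  proof
    fix s
    assume s: "s \<in> {s \<in> segment j. C s \<notin> S s}"
    moreover have "s \<in> {1..\<tau>}"
      using s segment_end_le_tau[OF assms] by auto
    ultimately have "even s"
      using C_in_S by blast
    then obtain q where q: "s = 2*q"
      by (auto elim: evenE)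
    with s have "m*j < q" "q \<le> m*j + m"
      by (simp_all add: mult.assoc)
    then have "2*m*j + 2*(q - m*j) = s" "q - m*j \<in> {1..m}"
      using q by (auto simp: mult.assoc)
    with s show "s \<in> (\<lambda>i. 2*m*j + 2*i) ` skipped j"
      unfolding skipped_def by (intro image_eqI[of s _ "q - m*j"]) auto
  qed
qed

lemma card_C_missing: "card {i \<in> {1..\<tau>}. C i \<notin> S i} = (\<Sum>j<\<kappa>. card (skipped j))"
proof -
  have "C \<tau> \<in> S \<tau>"
    by (rule C_in_S) (simp_all add: tau_eq)
  then have "{i \<in> {1..\<tau>}. C i \<notin> S i} = {s \<in> {1..<\<tau>}. C s \<notin> S s}"
    by (auto simp: order_le_less)
  also have "card \<dots> = (\<Sum>s\<in>{1..<\<tau>}. of_bool (C s \<notin> S s))"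
    by (simp only: card_filter_eq_sum_of_bool finite_atLeastLessThan)
  also have "\<dots> = (\<Sum>j<\<kappa>. \<Sum>s\<in>segment j. of_bool (C s \<notin> S s))"
    by (simp only: tau_eq sum_blocks)
  also have "\<dots> = (\<Sum>j<\<kappa>. card (skipped j))"
  proof (rule sum.cong[OF refl])
    fix j
    assume "j \<in> {..<\<kappa>}"
    then have "j < \<kappa>"
      by simp
    have "(\<Sum>s\<in>segment j. of_bool (C s \<notin> S s))
          = card {s \<in> segment j. C s \<notin> S s}"
      by (simp only: card_filter_eq_sum_of_bool finite_atLeastLessThan)
    also have "\<dots> = card ((\<lambda>i. 2*m*j + 2*i) ` skipped j)"
      by (simp only: C_missing_in_segment[OF \<open>j < \<kappa>\<close>])
    also have "\<dots> = card (skipped j)"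
      by (rule card_image) (simp add: inj_on_def)
    finally show "(\<Sum>s\<in>segment j. of_bool (C s \<notin> S s)) = card (skipped j)" .
  qed
  finally show ?thesis .
qed

definition required :: "'a vtx set" where
  "required = C ` {i \<in> {1..\<tau>}. C i \<in> S i} \<union> (\<lambda>(t, x). U t x) ` ({1..\<kappa>+1} \<times> {1..K})"

lemma finite_required: "finite required"
  by (simp add: required_def)

lemma card_required: "card required + (\<Sum>j<\<kappa>. card (skipped j)) = \<tau> + (\<kappa> + 1) * K"
proof -
  have "card {i \<in> {1..\<tau>}. C i \<in> S i} + card {i \<in> {1..\<tau>}. C i \<notin> S i} = \<tau>"
    using card_Int_Diff[of "{1..\<tau>}" "{i. C i \<in> S i}"] by (simp add: Int_def set_diff_eq)
  moreover have "card required = card (C ` {i \<in> {1..\<tau>}. C i \<in> S i} :: 'a vtx set)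
      + card ((\<lambda>(t, x). U t x) ` ({1..\<kappa>+1} \<times> {1..K}) :: 'a vtx set)"
    unfolding required_def by (rule card_Un_disjoint) auto
  moreover have "card (C ` {i \<in> {1..\<tau>}. C i \<in> S i} :: 'a vtx set) = card {i \<in> {1..\<tau>}. C i \<in> S i}"
    by (rule card_image) (simp add: inj_on_def)
  moreover have "card ((\<lambda>(t, x). U t x) ` ({1..\<kappa>+1} \<times> {1..K}) :: 'a vtx set) = (\<kappa> + 1) * K"
    by (subst card_image) (auto simp: inj_on_def)
  ultimately show ?thesis
    using card_C_missing by simp
qed

lemma required_present:
  assumes "v \<in> required"
  shows "\<exists>r\<in>{1..\<tau>}. v \<in> S r"
proof -
  consider (C) i where "v = C i" "i \<in> {1..\<tau>}" "C i \<in> S i"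
    | (U) t x where "v = U t x" "t \<in> {1..\<kappa>+1}" "x \<in> {1..K}"
    using assms unfolding required_def by auto
  then show ?thesis
  proof cases
    case (U t x)
    then obtain j where "t = j + 1" "j \<le> \<kappa>"
      by (cases t) auto
    with U U_in_S[of j x] segment_start_mem[of j] show ?thesis
      by auto
  qed blast
qed

lemma card_required_le_changes:
  "2 * card required \<le> (\<Sum>s\<in>{1..<\<tau>}. card (change s \<inter> required)) + 2 * k'"
proof -
  have missing: "card required \<le> card (required - S i) + k'" if "i \<in> {1..\<tau>}" for i
  proof -
    have "card (required \<inter> S i) \<le> k'"
      using card_mono[OF finite_S[OF that], of "required \<inter> S i"] card_S_le[OF that] by auto
    then show ?thesis
      using card_Int_Diff[OF finite_required, of "S i"] by simp
  qed
  have "card (required - S 1) + card (required - S \<tau>)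
        \<le> (\<Sum>s\<in>{1..<\<tau>}. card (change s \<inter> required))"
    using finite_required required_present by (rule card_misses_at_ends_le_changes)
  moreover have "1 \<in> {1..\<tau>}" "\<tau> \<in> {1..\<tau>}"
    by (simp_all add: tau_eq)
  ultimately show ?thesis
    using missing[of 1] missing[of \<tau>] by linarith
qed

lemma sum_changes_le:
  "(\<Sum>s\<in>{1..<\<tau>}. card (change s \<inter> required)) + (\<Sum>s\<in>{1..<\<tau>}. card (change s \<inter> graph_vertices))
     \<le> 4 * m * \<kappa>"
proof -
  have "card (change s \<inter> required) + card (change s \<inter> graph_vertices) \<le> 2" if "s \<in> {1..<\<tau>}" for s
  proof -
    have fin: "finite (change s)"
      using finite_S[of s] finite_S[of "Suc s"] that by (auto simp: symdiff_def)
    have "required \<inter> graph_vertices = {}"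
      by (auto simp: required_def)
    with fin have "card (change s \<inter> required) + card (change s \<inter> graph_vertices)
                     = card (change s \<inter> required \<union> change s \<inter> graph_vertices)"
      by (intro card_Un_disjoint[symmetric]) auto
    also have "\<dots> \<le> card (change s)"
      using fin by (intro card_mono) auto
    also have "\<dots> \<le> 2"
      using that by (rule card_change_le)
    finally show ?thesis .
  qed
  then have "(\<Sum>s\<in>{1..<\<tau>}. card (change s \<inter> required) + card (change s \<inter> graph_vertices))
               \<le> (\<Sum>s\<in>{1..<\<tau>}. 2)"
    by (rule sum_mono)
  then show ?thesis
    by (simp add: sum.distrib tau_eq)
qed

lemma ex_segment_many_skipped: "\<exists>j<\<kappa>. 2*K + graph_changes j \<le> 2 * card (skipped j) + 1"
proof (rule ccontr)
  assume "\<not> ?thesis"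
  then have "2 * card (skipped j) + 2 \<le> 2*K + graph_changes j" if "j < \<kappa>" for j
    using that by fastforce
  then have "(\<Sum>j<\<kappa>. 2 * card (skipped j) + 2) \<le> (\<Sum>j<\<kappa>. 2*K + graph_changes j)"
    by (intro sum_mono) simp
  moreover have "(\<Sum>j<\<kappa>. 2 * card (skipped j) + 2) = 2 * (\<Sum>j<\<kappa>. card (skipped j)) + 2*\<kappa>"
    by (subst sum.distrib) (simp add: sum_distrib_left)
  moreover have "(\<Sum>j<\<kappa>. 2*K + graph_changes j) = 2*K*\<kappa> + (\<Sum>j<\<kappa>. graph_changes j)"
    by (subst sum.distrib) simp
  moreover have "(\<Sum>j<\<kappa>. graph_changes j) = (\<Sum>s\<in>{1..<\<tau>}. card (change s \<inter> graph_vertices))"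
    by (simp only: tau_eq sum_blocks)
  \<comment> \<open>the required vertices leave too little of the budget 4 m \<kappa> for \<kappa> = K + k + 3 segments\<close>
  ultimately show False
    using card_required card_required_le_changes sum_changes_le tau_eq k'_eq kappa_eq
    by (simp add: algebra_simps)
qed

definition seen :: "nat \<Rightarrow> 'a vtx set" where
  "seen j = {v \<in> graph_vertices. \<exists>i\<in>{2*m*j+1..2*m*j+2*m+1}. v \<in> S i}"

lemma finite_seen: "finite (seen j)"
  using finite_V by (simp add: seen_def)

lemma card_seen:
  assumes "j < \<kappa>"
  shows "2 * card (seen j) \<le> graph_changes j + 2 * (K + k)"
proof -
  let ?a = "2*m*j + 1" and ?b = "2*m*j + 2*m + 1"
  have U_a: "\<forall>x\<in>{1..K}. U (j+1) x \<in> S ?a"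
    using U_in_S[of j] assms by simp
  have U_b: "\<forall>x\<in>{1..K}. U (j+2) x \<in> S ?b"
    using U_in_S[of "j+1"] assms by (simp add: algebra_simps)
  have missing: "card (seen j) \<le> card (seen j - S i) + (K + k)" if "i \<in> {?a, ?b}" for i
  proof -
    have i: "i \<in> {1..\<tau>}" "odd i"
      using that segment_end_le_tau[OF assms] by auto
    have "\<exists>t. \<forall>x\<in>{1..K}. U t x \<in> S i"
      using that U_a U_b by blast
    then have "card (S i \<inter> graph_vertices) \<le> K + k"
      using card_S_Int_graph_vertices[OF i(1) C_in_S[OF i(2) i(1)]] by blast
    moreover have "card (seen j \<inter> S i) \<le> card (S i \<inter> graph_vertices)"
      using finite_S[OF i(1)] by (intro card_mono) (auto simp: seen_def)
    ultimately show ?thesis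
      using card_Int_Diff[OF finite_seen[of j], of "S i"] by simp
  qed
  have "card (seen j - S ?a) + card (seen j - S ?b) \<le> (\<Sum>s\<in>{?a..<?b}. card (change s \<inter> seen j))"
    using finite_seen by (rule card_misses_at_ends_le_changes) (auto simp: seen_def)
  also have "\<dots> \<le> (\<Sum>s\<in>{?a..<?b}. card (change s \<inter> graph_vertices))"
    using finite_V by (intro sum_mono card_mono) (auto simp: seen_def)
  finally show ?thesis
    using missing[of ?a] missing[of ?b] by simp
qed

definition skipped_edges :: "nat \<Rightarrow> 'a set set" where
  "skipped_edges j = (\<lambda>i. es ! (i - 1)) ` skipped j"

lemma card_skipped_edges: "card (skipped_edges j) = card (skipped j)"
  unfolding skipped_edges_def
proof (rule card_image, rule inj_onI)
  fix i i'
  assume "i \<in> skipped j" "i' \<in> skipped j" "es ! (i - 1) = es ! (i' - 1)"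
  moreover from this have "i - 1 < m" "i' - 1 < m" "0 < i" "0 < i'"
    by (auto simp: skipped_def)
  ultimately show "i = i'"
    using nth_eq_iff_index_eq[OF distinct_es] by fastforce
qed

lemma skipped_edge_seen:
  assumes "j < \<kappa>" "e \<in> skipped_edges j"
  shows "e \<in> set es \<and> EdgeV e \<in> seen j \<and> e \<subseteq> {v \<in> V. Orig v \<in> seen j} \<and> card e = 2"
proof -
  obtain i where i: "i \<in> skipped j" "e = es ! (i - 1)"
    using assms(2) by (auto simp: skipped_edges_def)
  let ?s = "2*m*j + 2*i"
  have i_range: "i \<in> {1..m}" and C_skipped: "C ?s \<notin> S ?s"
    using i(1) by (auto simp: skipped_def)
  then have "e \<in> set es"
    using i(2) by auto
  with es_edges obtain v w where vw: "v \<in> V" "w \<in> V" "v \<noteq> w" "e = {v, w}"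
    by blast
  have s: "?s \<in> {2*m*j+1..2*m*j+2*m+1}"
    using i_range by auto
  with segment_end_le_tau[OF assms(1)] have cover: "is_vertex_cover (red_layer es k ?s) (S ?s)"
    by (intro vertex_cover_S) auto
  from i(2) vw(4) have "es ! (i - 1) = {v, w}"
    by simp
  have "x \<in> S ?s" if "x \<in> {EdgeV e, Orig v, Orig w}" for x
    using vertex_cover_edge[OF cover layer_edge[OF assms(1) i_range \<open>es ! (i - 1) = {v, w}\<close>]]
      that C_skipped i(2) by auto
  then have "EdgeV e \<in> S ?s" "Orig v \<in> S ?s" "Orig w \<in> S ?s"
    by simp_all
  with s vw(1,2) \<open>e \<in> set es\<close> have "EdgeV e \<in> seen j" "Orig v \<in> seen j" "Orig w \<in> seen j"
    unfolding seen_def by blast+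
  with vw \<open>e \<in> set es\<close> show ?thesis
    by auto
qed

lemma clique_if_many_skipped:
  assumes "2 \<le> k" "j < \<kappa>"
    and many: "2*K + graph_changes j \<le> 2 * card (skipped j) + 1"
  shows "has_clique V (set es) k"
proof -
  define Q where "Q = {v \<in> V. Orig v \<in> seen j}"
  have "finite (skipped_edges j)" "finite Q" "Q \<subseteq> V"
    using finite_V by (auto simp: skipped_edges_def Q_def skipped_def)
  then have "card (EdgeV ` skipped_edges j \<union> Orig ` Q)
             = card (EdgeV ` skipped_edges j) + card (Orig ` Q)"
    by (intro card_Un_disjoint) auto
  also have "\<dots> = card (skipped_edges j) + card Q"
    by (simp add: card_image inj_on_def)
  finally have "card (skipped_edges j) + card Q \<le> card (seen j)"
    using skipped_edge_seen[OF assms(2)]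
      card_mono[OF finite_seen, of "EdgeV ` skipped_edges j \<union> Orig ` Q"]
    by (auto simp: Q_def)
  then have "card Q \<le> k" "K \<le> card (skipped_edges j)"
    using card_seen[OF assms(2)] many card_skipped_edges[of j] by simp_all
  with \<open>finite Q\<close> \<open>Q \<subseteq> V\<close> show ?thesis
    using skipped_edge_seen[OF assms(2)] assms(1)
    by (intro has_clique_if_many_edges[of Q V k "skipped_edges j"]) (auto simp: Q_def red_K_def)
qed

end

theorem lemma29:
  fixes V :: "'a set" and es :: "'a set list" and k :: nat
  assumes "finite V" and "V \<noteq> {}"
    and "distinct es"
    and "\<forall>e\<in>set es. \<exists>v w. v \<in> V \<and> w \<in> V \<and> v \<noteq> w \<and> e = {v, w}"
    and "k > 0"
    and "multistage_vc_yes (red_vertices V es k) (red_layer es k) (red_tau es k) (red_k' k) red_l"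
  shows "has_clique V (set es) k"
proof (cases "k = 1")
  case True
  from assms(2) obtain v where "v \<in> V"
    by blast
  with True show ?thesis
    unfolding has_clique_def by (intro exI[of _ "{v}"]) auto
next
  case False
  from assms(6) obtain S where "red_solution V es k S"
    using assms(1,3,4) unfolding multistage_vc_yes_def red_solution_def by blast
  then interpret red_solution V es k S .
  from False assms(5) have "2 \<le> k"
    by simp
  with ex_segment_many_skipped clique_if_many_skipped show ?thesis
    by blast
qed

end
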